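(* Assume $\mathcal G$ is connected. Let $\mathrm y^\star=(\mathrm y^\star_1,\dots,\mathrm y^\star_{|\mathbb V|})\in(\mathbb R^d)^{|\mathbb V|}$ and $\zeta^\star=\mathcal E^T\mathrm y^\star$, and define $A:\mathbb R^d\to\mathbb R\cup\{+\infty\}$ by $A(\beta)=K^\star(\mathrm y^\star+\mathbf 1_{|\mathbb V|}\otimes\beta)=\sum_{i=1}^{|\mathbb V|}K_i^\star(\mathrm y_i^\star+\beta)$. If $\mathbf 0\in\sum_{i=1}^{|\mathbb V|}k_i^{-1}(\mathrm y_i^\star)$ and $A$ is strictly convex on a neighborhood of $\beta=0$, then $\mathrm y^\star$ is the unique minimizer of $K^\star(\mathrm y)$ over the set $\{\mathrm y:\mathcal E^T\mathrm y=\zeta^\star\}$.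
   Context: $\mathcal G=(\mathbb V,\mathbb E)$ is a finite graph with arbitrarily oriented edges and incidence matrix $E$ ($E_{ik}=-1$, $E_{jk}=1$ for edge $k=(i,j)$, other entries of column $k$ zero); $d\ge1$, $\mathcal E=E\otimes I_d$; $\mathbf 1_{|\mathbb V|}$ the all-ones vector. For each $i\in\mathbb V$, $k_i\subseteq\mathbb R^d\times\mathbb R^d$ is a maximal cyclically monotone relation (cyclically monotone: $\sum_{j=1}^N y_j^T(u_j-u_{j-1})\ge0$ for all $N\ge1$, $(u_1,y_1),\dots,(u_N,y_N)\in k_i$, $u_0=u_N$; maximal: not strictly contained in a larger such relation), so $k_i=\partial K_i$ for a closed proper convex $K_i:\mathbb R^d\to\mathbb R\cup\{+\infty\}$; $K_i^\star(y)=\sup_u\{y^Tu-K_i(u)\}$, $K^\star(\mathrm y)=\sum_iK_i^\star(\mathrm y_i)$, $k_i^{-1}(\mathrm y_i)=\{\mathrm u_i:(\mathrm u_i,\mathrm y_i)\in k_i\}$, and the sum of sets is the Minkowski sum. *)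

theory Defs
  imports "HOL-Analysis.Analysis"
begin

definition cyclically_monotone :: "('a::euclidean_space \<times> 'a) set \<Rightarrow> bool" where
  "cyclically_monotone R \<longleftrightarrow>
     (\<forall>N::nat. \<forall>u y :: nat \<Rightarrow> 'a. N \<ge> 1 \<longrightarrow> (\<forall>j\<in>{1..N}. (u j, y j) \<in> R) \<longrightarrow> u 0 = u N \<longrightarrow>
        (\<Sum>j=1..N. y j \<bullet> (u j - u (j - 1))) \<ge> 0)"

definition maximal_cyclically_monotone :: "('a::euclidean_space \<times> 'a) set \<Rightarrow> bool" where
  "maximal_cyclically_monotone R \<longleftrightarrow> cyclically_monotone R \<and>
     (\<forall>R'. cyclically_monotone R' \<and> R \<subseteq> R' \<longrightarrow> R' = R)"

definition epigraph :: "('a \<Rightarrow> ereal) \<Rightarrow> ('a \<times> real) set" where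
  "epigraph K = {(x, r). K x \<le> ereal r}"

definition proper_fun :: "('a \<Rightarrow> ereal) \<Rightarrow> bool" where
  "proper_fun K \<longleftrightarrow> (\<forall>x. K x \<noteq> -\<infinity>) \<and> (\<exists>x. K x \<noteq> \<infinity>)"

definition closed_proper_convex :: "('a::euclidean_space \<Rightarrow> ereal) \<Rightarrow> bool" where
  "closed_proper_convex K \<longleftrightarrow> proper_fun K \<and> convex (epigraph K) \<and> closed (epigraph K)"

definition subdifferential :: "('a::euclidean_space \<Rightarrow> ereal) \<Rightarrow> ('a \<times> 'a) set" where
  "subdifferential K = {(u, y). K u \<noteq> \<infinity> \<and> (\<forall>v. K v \<ge> K u + ereal (y \<bullet> (v - u)))}"

definition conjugate :: "('a::euclidean_space \<Rightarrow> ereal) \<Rightarrow> 'a \<Rightarrow> ereal" where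
  "conjugate K y = (SUP u. ereal (y \<bullet> u) - K u)"

definition minkowski_sum :: "'i set \<Rightarrow> ('i \<Rightarrow> 'a::comm_monoid_add set) \<Rightarrow> 'a set" where
  "minkowski_sum I S = {(\<Sum>i\<in>I. u i) | u. \<forall>i\<in>I. u i \<in> S i}"

definition rel_inv :: "('a \<times> 'b) set \<Rightarrow> 'b \<Rightarrow> 'a set" where
  "rel_inv R y = {u. (u, y) \<in> R}"

definition strictly_convex_on_ereal :: "'a::real_vector set \<Rightarrow> ('a \<Rightarrow> ereal) \<Rightarrow> bool" where
  "strictly_convex_on_ereal S f \<longleftrightarrow>
     (\<forall>x\<in>S. \<forall>y\<in>S. \<forall>t::real. x \<noteq> y \<and> 0 < t \<and> t < 1 \<longrightarrow>
        f ((1 - t) *\<^sub>R x + t *\<^sub>R y) < ereal (1 - t) * f x + ereal t * f y)"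

text \<open>Graph with vertex set V, edge (index) set Ed, each edge e oriented from
  tail e to head e. (E^T \<otimes> I_d) y at edge e = y(head e) - y(tail e).\<close>
definition incidenceT :: "'e set \<Rightarrow> ('e \<Rightarrow> 'v) \<Rightarrow> ('e \<Rightarrow> 'v) \<Rightarrow> ('v \<Rightarrow> 'a::ab_group_add) \<Rightarrow> ('e \<Rightarrow> 'a)" where
  "incidenceT Ed src tgt y = (\<lambda>e. if e \<in> Ed then y (tgt e) - y (src e) else 0)"

definition graph_connected :: "'v set \<Rightarrow> 'e set \<Rightarrow> ('e \<Rightarrow> 'v) \<Rightarrow> ('e \<Rightarrow> 'v) \<Rightarrow> bool" where
  "graph_connected V Ed src tgt \<longleftrightarrow>
     (\<forall>i\<in>V. \<forall>j\<in>V. (i, j) \<in> ({(src e, tgt e) | e. e \<in> Ed} \<union> {(tgt e, src e) | e. e \<in> Ed})\<^sup>*)"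

end

theory Submission
  imports Defs
begin

text \<open>Pick \<open>u\<^sub>i \<in> k\<^sub>i\<^sup>-\<^sup>1(y\<^sup>\<star>\<^sub>i)\<close> with \<open>\<Sum> u\<^sub>i = 0\<close>. By the Fenchel--Young equality
  \<open>K\<^sub>i\<^sup>\<star>(y\<^sup>\<star>\<^sub>i) = y\<^sup>\<star>\<^sub>i\<cdot>u\<^sub>i - K\<^sub>i(u\<^sub>i)\<close> and the inequality \<open>K\<^sub>i\<^sup>\<star>(b) \<ge> b\<cdot>u\<^sub>i - K\<^sub>i(u\<^sub>i)\<close>,
  summing gives \<open>A(\<beta>) \<ge> A(0) + \<beta>\<cdot>\<Sum>u\<^sub>i = A(0)\<close>. On a connected graph the points with
  \<open>\<E>\<^sup>Ty = \<zeta>\<^sup>\<star>\<close> are exactly the shifts \<open>y\<^sup>\<star> + 1 \<otimes> \<beta>\<close>, whose cost is \<open>A(\<beta>)\<close>, so \<open>y\<^sup>\<star>\<close>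
  is a minimiser. If \<open>A(\<beta>) = A(0)\<close> with \<open>\<beta> \<noteq> 0\<close>, convexity of \<open>A\<close> makes it constant on
  the segment \<open>[0, \<beta>]\<close>, which contradicts strict convexity near \<open>0\<close>.\<close>

lemma subdifferential_proper_finite:
  assumes "(u, y) \<in> subdifferential K" and "proper_fun K"
  shows "\<exists>r. K u = ereal r"
  using assms unfolding subdifferential_def proper_fun_def by (cases "K u") auto

lemma conjugate_ge: "ereal (b \<bullet> u) - K u \<le> conjugate K b"
  unfolding conjugate_def by (rule SUP_upper) auto

lemma conjugate_ge_affine:
  assumes "K u = ereal r"
  shows "ereal (b \<bullet> u - r) \<le> conjugate K b"
  using conjugate_ge[of b u K] assms by simp

lemma conjugate_at_subgradient:
  assumes "(u, y) \<in> subdifferential K" and "K u = ereal r"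
  shows "conjugate K y = ereal (y \<bullet> u - r)"
proof (rule antisym)
  have sg: "K v \<ge> ereal (r + y \<bullet> (v - u))" for v
    using assms unfolding subdifferential_def by auto
  show "conjugate K y \<le> ereal (y \<bullet> u - r)"
    unfolding conjugate_def
  proof (rule SUP_least)
    fix v
    show "ereal (y \<bullet> v) - K v \<le> ereal (y \<bullet> u - r)"
      using sg[of v] by (cases "K v") (auto simp: inner_diff_right)
  qed
  show "ereal (y \<bullet> u - r) \<le> conjugate K y"
    using conjugate_ge_affine[of K u r y] assms(2) by simp
qed

lemma conjugate_convex:
  assumes "conjugate K a = ereal p" and "conjugate K b = ereal q" and "0 \<le> t" "t \<le> 1"
  shows "conjugate K ((1 - t) *\<^sub>R a + t *\<^sub>R b) \<le> ereal ((1 - t) * p + t * q)"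
  unfolding conjugate_def
proof (rule SUP_least)
  fix u
  show "ereal (((1 - t) *\<^sub>R a + t *\<^sub>R b) \<bullet> u) - K u \<le> ereal ((1 - t) * p + t * q)"
  proof (cases "K u")
    case (real r)
    have "a \<bullet> u - r \<le> p"
      using conjugate_ge_affine[of K u r a] real assms(1) by simp
    moreover have "b \<bullet> u - r \<le> q"
      using conjugate_ge_affine[of K u r b] real assms(2) by simp
    ultimately
    have "(1 - t) * (a \<bullet> u - r) + t * (b \<bullet> u - r) \<le> (1 - t) * p + t * q"
      using assms(3,4) by (intro add_mono mult_left_mono) auto
    then show ?thesis
      using real by (simp add: inner_add_left algebra_simps)
  next
    case MInf
    with conjugate_ge[of a u K] assms(1) show ?thesis by simp
  qed simp
qed

lemma strictly_convex_on_ereal_not_flat: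
  fixes f :: "'a::real_normed_vector \<Rightarrow> ereal"
  assumes "\<epsilon> > 0" and strict: "strictly_convex_on_ereal (ball 0 \<epsilon>) f"
    and min: "\<And>x. f 0 \<le> f x"
    and flat: "\<And>t. 0 \<le> t \<Longrightarrow> t \<le> 1 \<Longrightarrow> f (t *\<^sub>R \<beta>) \<le> f 0"
  shows "\<beta> = 0"
proof (rule ccontr)
  assume "\<beta> \<noteq> 0"
  define t where "t = min 1 (\<epsilon> / (2 * norm \<beta>))"
  have "norm \<beta> > 0" using \<open>\<beta> \<noteq> 0\<close> by simp
  then have "0 < t" "t \<le> 1" "t * norm \<beta> < \<epsilon>"
    using \<open>\<epsilon> > 0\<close> by (auto simp: t_def min_def field_simps)
  then have w: "t *\<^sub>R \<beta> \<in> ball 0 \<epsilon>" "t *\<^sub>R \<beta> \<noteq> 0" and fw: "f (t *\<^sub>R \<beta>) = f 0"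
    using \<open>\<beta> \<noteq> 0\<close> flat[of t] min[of "t *\<^sub>R \<beta>"] by auto
  have "f ((1 - 1/2) *\<^sub>R 0 + (1/2) *\<^sub>R (t *\<^sub>R \<beta>)) < ereal (1 - 1/2) * f 0 + ereal (1/2) * f (t *\<^sub>R \<beta>)"
    by (rule strict[unfolded strictly_convex_on_ereal_def, rule_format]) (use w \<open>\<epsilon> > 0\<close> in auto)
  also have "\<dots> = f 0"
    unfolding fw by (cases "f 0") auto
  finally show False
    using min not_less by blast
qed

lemma graph_connected_incidenceT_eq_imp_shift:
  assumes conn: "graph_connected V Ed src tgt"
    and eq: "incidenceT Ed src tgt y = incidenceT Ed src tgt y'"
  shows "\<exists>\<beta>. \<forall>i\<in>V. y i = y' i + \<beta>"
proof (cases "V = {}")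
  case False
  then obtain i0 where i0: "i0 \<in> V" by auto
  define d where "d i = y i - y' i" for i
  have edge: "d (tgt e) = d (src e)" if "e \<in> Ed" for e
    using fun_cong[OF eq, of e] that unfolding incidenceT_def d_def by (simp add: algebra_simps)
  have "d j = d i0"
    if "(i0, j) \<in> ({(src e, tgt e) | e. e \<in> Ed} \<union> {(tgt e, src e) | e. e \<in> Ed})\<^sup>*" for j
    using that by (induction rule: rtrancl_induct) (use edge in auto)
  with conn i0 have "\<forall>i\<in>V. d i = d i0"
    unfolding graph_connected_def by blast
  then show ?thesis
    by (intro exI[of _ "d i0"]) (auto simp: d_def algebra_simps)
qed simp

lemma sum_conjugate_shift_ge:
  assumes "finite V" and "\<forall>i\<in>V. (u i, y i) \<in> subdifferential (K i)"
    and r: "\<forall>i\<in>V. K i (u i) = ereal (r i)" and "(\<Sum>i\<in>V. u i) = 0"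
  shows "(\<Sum>i\<in>V. conjugate (K i) (y i)) \<le> (\<Sum>i\<in>V. conjugate (K i) (y i + \<beta>))"
proof -
  have "(\<Sum>i\<in>V. conjugate (K i) (y i)) = (\<Sum>i\<in>V. ereal (y i \<bullet> u i - r i))"
    using assms(2) r by (intro sum.cong refl conjugate_at_subgradient) auto
  also have "\<dots> = ereal ((\<Sum>i\<in>V. y i \<bullet> u i - r i) + \<beta> \<bullet> (\<Sum>i\<in>V. u i))"
    using assms(4) by (simp add: sum_ereal)
  also have "\<dots> = ereal (\<Sum>i\<in>V. (y i + \<beta>) \<bullet> u i - r i)"
    by (simp add: inner_add_left sum.distrib sum_subtractf inner_sum_right)
  also have "\<dots> \<le> (\<Sum>i\<in>V. conjugate (K i) (y i + \<beta>))"
    unfolding sum_ereal[symmetric] using r by (intro sum_mono conjugate_ge_affine) auto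
  finally show ?thesis .
qed

lemma sum_conjugate_segment_le:
  assumes "finite V" and "\<forall>i\<in>V. (u i, y i) \<in> subdifferential (K i)"
    and r: "\<forall>i\<in>V. K i (u i) = ereal (r i)"
    and le: "(\<Sum>i\<in>V. conjugate (K i) (y i + \<beta>)) \<le> (\<Sum>i\<in>V. conjugate (K i) (y i))"
    and "0 \<le> t" "t \<le> 1"
  shows "(\<Sum>i\<in>V. conjugate (K i) (y i + t *\<^sub>R \<beta>)) \<le> (\<Sum>i\<in>V. conjugate (K i) (y i))"
proof -
  define p where "p i = y i \<bullet> u i - r i" for i
  have p: "conjugate (K i) (y i) = ereal (p i)" if "i \<in> V" for i
    using assms(2) r that conjugate_at_subgradient unfolding p_def by blast
  have sum_p: "(\<Sum>i\<in>V. conjugate (K i) (y i)) = ereal (\<Sum>i\<in>V. p i)"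
    unfolding sum_ereal[symmetric] by (rule sum.cong) (simp_all add: p)
  have bounded_below: "conjugate (K i) (y i + \<beta>) \<noteq> -\<infinity>" if "i \<in> V" for i
    using conjugate_ge_affine[of "K i" "u i" "r i" "y i + \<beta>"] r that by auto
  have "(\<Sum>i\<in>V. conjugate (K i) (y i + \<beta>)) \<noteq> \<infinity>"
    using le sum_p by auto
  then have bounded_above: "conjugate (K i) (y i + \<beta>) \<noteq> \<infinity>" if "i \<in> V" for i
    using that \<open>finite V\<close> sum_Pinfty by blast
  define q where "q i = real_of_ereal (conjugate (K i) (y i + \<beta>))" for i
  have q: "conjugate (K i) (y i + \<beta>) = ereal (q i)" if "i \<in> V" for i
    using bounded_below[OF that] bounded_above[OF that] unfolding q_def
    by (cases "conjugate (K i) (y i + \<beta>)") auto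
  have "(\<Sum>i\<in>V. conjugate (K i) (y i + \<beta>)) = ereal (\<Sum>i\<in>V. q i)"
    unfolding sum_ereal[symmetric] by (rule sum.cong) (simp_all add: q)
  with le sum_p have "(\<Sum>i\<in>V. q i) \<le> (\<Sum>i\<in>V. p i)"
    by simp
  have "(\<Sum>i\<in>V. conjugate (K i) (y i + t *\<^sub>R \<beta>)) \<le> (\<Sum>i\<in>V. ereal ((1 - t) * p i + t * q i))"
  proof (rule sum_mono)
    fix i assume "i \<in> V"
    have "y i + t *\<^sub>R \<beta> = (1 - t) *\<^sub>R y i + t *\<^sub>R (y i + \<beta>)"
      by (simp add: algebra_simps)
    then show "conjugate (K i) (y i + t *\<^sub>R \<beta>) \<le> ereal ((1 - t) * p i + t * q i)"
      using conjugate_convex[OF p q] \<open>i \<in> V\<close> assms(5,6) by simp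
  qed
  also have "\<dots> = ereal ((1 - t) * (\<Sum>i\<in>V. p i) + t * (\<Sum>i\<in>V. q i))"
    by (simp add: sum_ereal sum.distrib sum_distrib_left)
  also have "\<dots> \<le> ereal (\<Sum>i\<in>V. p i)"
    using \<open>(\<Sum>i\<in>V. q i) \<le> (\<Sum>i\<in>V. p i)\<close> \<open>0 \<le> t\<close> by (simp add: algebra_simps mult_left_mono)
  also have "\<dots> = (\<Sum>i\<in>V. conjugate (K i) (y i))"
    by (rule sum_p[symmetric])
  finally show ?thesis .
qed

lemma sum_conjugate_shift_unique_min:
  assumes "finite V" and "\<forall>i\<in>V. (u i, y i) \<in> subdifferential (K i)"
    and "\<forall>i\<in>V. K i (u i) = ereal (r i)" and "(\<Sum>i\<in>V. u i) = 0"
    and "\<epsilon> > 0" and "strictly_convex_on_ereal (ball 0 \<epsilon>) (\<lambda>\<beta>. \<Sum>i\<in>V. conjugate (K i) (y i + \<beta>))"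
    and "(\<Sum>i\<in>V. conjugate (K i) (y i + \<beta>)) \<le> (\<Sum>i\<in>V. conjugate (K i) (y i))"
  shows "\<beta> = 0"
  using assms(5,6)
proof (rule strictly_convex_on_ereal_not_flat)
  show "(\<Sum>i\<in>V. conjugate (K i) (y i + 0)) \<le> (\<Sum>i\<in>V. conjugate (K i) (y i + x))" for x
    using sum_conjugate_shift_ge[OF assms(1-4)] by simp
  show "(\<Sum>i\<in>V. conjugate (K i) (y i + t *\<^sub>R \<beta>)) \<le> (\<Sum>i\<in>V. conjugate (K i) (y i + 0))"
    if "0 \<le> t" "t \<le> 1" for t
    using sum_conjugate_segment_le[OF assms(1-3,7) that] by simp
qed

theorem mainTheorem9:
  fixes V :: "'v set" and Ed :: "'e set" and src tgt :: "'e \<Rightarrow> 'v"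
    and k :: "'v \<Rightarrow> ('a::euclidean_space \<times> 'a) set"
    and K :: "'v \<Rightarrow> 'a \<Rightarrow> ereal"
    and ystar :: "'v \<Rightarrow> 'a"
  assumes finV: "finite V" and finE: "finite Ed"
    and edges: "\<forall>e\<in>Ed. src e \<in> V \<and> tgt e \<in> V"
    and conn: "graph_connected V Ed src tgt"
    and kmax: "\<forall>i\<in>V. maximal_cyclically_monotone (k i)"
    and Kcpc: "\<forall>i\<in>V. closed_proper_convex (K i)"
    and kK: "\<forall>i\<in>V. k i = subdifferential (K i)"
    and zero_in: "0 \<in> minkowski_sum V (\<lambda>i. rel_inv (k i) (ystar i))"
    and strict: "\<exists>\<epsilon>>0. strictly_convex_on_ereal (ball 0 \<epsilon>)
                   (\<lambda>\<beta>. \<Sum>i\<in>V. conjugate (K i) (ystar i + \<beta>))"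
  shows "(\<forall>y. incidenceT Ed src tgt y = incidenceT Ed src tgt ystar \<longrightarrow>
             (\<Sum>i\<in>V. conjugate (K i) (ystar i)) \<le> (\<Sum>i\<in>V. conjugate (K i) (y i)))
       \<and> (\<forall>y. incidenceT Ed src tgt y = incidenceT Ed src tgt ystar \<and>
             (\<forall>z. incidenceT Ed src tgt z = incidenceT Ed src tgt ystar \<longrightarrow>
                 (\<Sum>i\<in>V. conjugate (K i) (y i)) \<le> (\<Sum>i\<in>V. conjugate (K i) (z i)))
             \<longrightarrow> (\<forall>i\<in>V. y i = ystar i))"
proof -
  obtain u where u: "\<forall>i\<in>V. (u i, ystar i) \<in> subdifferential (K i)" and sum_u: "(\<Sum>i\<in>V. u i) = 0"
    using zero_in kK unfolding minkowski_sum_def rel_inv_def by auto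
  have "\<forall>i\<in>V. \<exists>r. K i (u i) = ereal r"
    using u Kcpc subdifferential_proper_finite unfolding closed_proper_convex_def by blast
  then obtain r where r: "\<forall>i\<in>V. K i (u i) = ereal (r i)"
    by (metis bchoice)
  obtain \<epsilon> where \<epsilon>: "\<epsilon> > 0"
    "strictly_convex_on_ereal (ball 0 \<epsilon>) (\<lambda>\<beta>. \<Sum>i\<in>V. conjugate (K i) (ystar i + \<beta>))"
    using strict by blast
  note min = sum_conjugate_shift_ge[OF finV u r sum_u]
  note unique = sum_conjugate_shift_unique_min[OF finV u r sum_u \<epsilon>]
  have cost: "(\<Sum>i\<in>V. conjugate (K i) (y i)) = (\<Sum>i\<in>V. conjugate (K i) (ystar i + \<beta>))"
    if "\<forall>i\<in>V. y i = ystar i + \<beta>" for y \<beta>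
    using that by (intro sum.cong) auto
  show ?thesis
  proof (intro conjI allI impI)
    fix y assume "incidenceT Ed src tgt y = incidenceT Ed src tgt ystar"
    then obtain \<beta> where "\<forall>i\<in>V. y i = ystar i + \<beta>"
      using graph_connected_incidenceT_eq_imp_shift[OF conn] by blast
    with cost min show "(\<Sum>i\<in>V. conjugate (K i) (ystar i)) \<le> (\<Sum>i\<in>V. conjugate (K i) (y i))"
      by simp
  next
    fix y
    assume y: "incidenceT Ed src tgt y = incidenceT Ed src tgt ystar \<and>
      (\<forall>z. incidenceT Ed src tgt z = incidenceT Ed src tgt ystar \<longrightarrow>
        (\<Sum>i\<in>V. conjugate (K i) (y i)) \<le> (\<Sum>i\<in>V. conjugate (K i) (z i)))"
    then obtain \<beta> where \<beta>: "\<forall>i\<in>V. y i = ystar i + \<beta>"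
      using graph_connected_incidenceT_eq_imp_shift[OF conn] by blast
    with y cost have "(\<Sum>i\<in>V. conjugate (K i) (ystar i + \<beta>)) \<le> (\<Sum>i\<in>V. conjugate (K i) (ystar i))"
      by simp
    with unique \<beta> show "\<forall>i\<in>V. y i = ystar i"
      by simp
  qed
qed

end
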